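(* Let $k\ge 1$ be an integer. A fair coin is flipped independently until $\mathrm{H}^k\mathrm{T}$ ($k$ heads followed by a tails) first appears as consecutive flips; let $Y$ be the number of flips. Then for every $n\ge 1$, \[ E(Y^n) = 2^{k+1} b_n + \sum_{j=1}^{n-1} \binom{n}{j} E(Y^j) \sum_{i=1}^k i^{n-j}\, 2^{k-i}. \]
   Context: $b_n$ denotes the ordered Bell (Fubini) number $b_n=\sum_{i=0}^\infty \frac{i^n}{2^{i+1}}$ (with $0^0=1$), equivalently $b_n=\sum_{i=0}^n e_{n,i}2^{n-i}$ where $e_{n,i}$ are the Eulerian numbers ($e_{0,0}=1$, $e_{n,i}=0$ for $i\le0$ unless $n=i=0$ or for $i>n$, and $e_{n,i}=i e_{n-1,i}+(n-i+1)e_{n-1,i-1}$ otherwise); $b_0,b_1,b_2,\dots=1,1,3,13,75,\dots$. *)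

theory Defs
  imports Complex_Main
begin

fun eulerian :: "nat \<Rightarrow> nat \<Rightarrow> nat" where
  "eulerian 0 i = (if i = 0 then 1 else 0)"
| "eulerian (Suc n) i =
     (if i = 0 \<or> i > Suc n then 0
      else i * eulerian n i + (Suc n - i + 1) * eulerian n (i - 1))"

definition fubini :: "nat \<Rightarrow> nat" where
  "fubini n = (\<Sum>i=0..n. eulerian n i * 2 ^ (n - i))"

text \<open>Coin-flip outcomes are boolean lists, True = heads, False = tails.
  The pattern H^k T ends at (1-based) position j of w: flips j-k, ..., j-1 are
  heads and flip j is tails.\<close>
definition hkt_ends_at :: "nat \<Rightarrow> bool list \<Rightarrow> nat \<Rightarrow> bool" where
  "hkt_ends_at k w j \<longleftrightarrow> k + 1 \<le> j \<and> j \<le> length w \<and> \<not> w ! (j - 1) \<and>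
     (\<forall>i. j - k - 1 \<le> i \<and> i < j - 1 \<longrightarrow> w ! i)"

definition first_hkt :: "nat \<Rightarrow> bool list \<Rightarrow> bool" where
  "first_hkt k w \<longleftrightarrow> hkt_ends_at k w (length w) \<and> (\<forall>j < length w. \<not> hkt_ends_at k w j)"

text \<open>P(Y = m) for a fair coin flipped independently: the fraction of the 2^m
  equally likely outcomes of the first m flips for which H^k T first appears at flip m.\<close>
definition prob_Y :: "nat \<Rightarrow> nat \<Rightarrow> real" where
  "prob_Y k m = real (card {w :: bool list. length w = m \<and> first_hkt k w}) / 2 ^ m"

definition moment_Y :: "nat \<Rightarrow> nat \<Rightarrow> real" where
  "moment_Y k n = (\<Sum>m. real m ^ n * prob_Y k m)"

end

theory Submission
  imports Defs
begin

text \<open>Cutting a word after its first tail shows that H^k T first appears at flip m either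
  in the word H^(m-1) T with m > k, or after a prefix H^(i-1) T with i \<le> k followed by a
  word in which H^k T first appears at flip m - i. Hence
  P(Y = m) = [m > k] 2^-m + sum_{i=1..k} 2^-i P(Y = m - i).
  Multiplying by m^n = ((m - i) + i)^n, expanding binomially and summing over m expresses
  E(Y^n) through the moments E(Y^j), j \<le> n; since the weights 2^-i add up to 1 - 2^-k < 1,
  the same computation shows that all moments are finite and can be solved for E(Y^n).
  What remains are the geometric moments sum_m m^n 2^-m, which equal 2 b_n by Worpitzky's
  identity m^n = sum_i e(n,i) C(m+n-i, n) and sum_m C(m,n) 2^-m = 2.\<close>

section \<open>First occurrences of H^k T\<close>

abbreviation heads_tails :: "nat \<Rightarrow> bool list \<Rightarrow> bool list" where
  "heads_tails a u \<equiv> replicate a True @ False # u"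

abbreviation first_hkt_words :: "nat \<Rightarrow> nat \<Rightarrow> bool list set" where
  "first_hkt_words k m \<equiv> {w. length w = m \<and> first_hkt k w}"

lemma nth_heads_tails:
  "heads_tails a u ! i = (if i < a then True else if i = a then False else u ! (i - Suc a))"
  by (auto simp: nth_append nth_Cons')

lemma hkt_ends_at_append:
  assumes "k < j"
  shows "hkt_ends_at k (v @ u) (length v + j) \<longleftrightarrow> hkt_ends_at k u j"
proof -
  have "(\<forall>i. length v + j - k - 1 \<le> i \<and> i < length v + j - 1 \<longrightarrow> (v @ u) ! i) \<longleftrightarrow>
        (\<forall>i. j - k - 1 \<le> i \<and> i < j - 1 \<longrightarrow> u ! i)"
  proof safe
    fix i assume window: "\<forall>i. length v + j - k - 1 \<le> i \<and> i < length v + j - 1 \<longrightarrow> (v @ u) ! i"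
      and "j - k - 1 \<le> i" "i < j - 1"
    then have "length v + j - k - 1 \<le> length v + i \<and> length v + i < length v + j - 1"
      using assms by linarith
    with window have "(v @ u) ! (length v + i)" by blast
    then show "u ! i" by simp
  next
    fix i assume window: "\<forall>i. j - k - 1 \<le> i \<and> i < j - 1 \<longrightarrow> u ! i"
      and "length v + j - k - 1 \<le> i" "i < length v + j - 1"
    then have "length v \<le> i" "j - k - 1 \<le> i - length v \<and> i - length v < j - 1"
      using assms by linarith+
    with window show "(v @ u) ! i" by (simp add: nth_append)
  qed
  then show ?thesis using assms by (auto simp: hkt_ends_at_def nth_append)
qed

lemma hkt_ends_at_heads_tails:
  "hkt_ends_at k (heads_tails a u) j \<longleftrightarrow>
     (j = Suc a \<and> k \<le> a) \<or> (Suc a < j \<and> hkt_ends_at k u (j - Suc a))"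
proof -
  consider "j \<le> a" | "j = Suc a" | "Suc a < j" "j \<le> Suc a + k" | "Suc a + k < j"
    by linarith
  then show ?thesis
  proof cases
    case 3
    have "\<not> hkt_ends_at k (heads_tails a u) j"
    proof
      assume "hkt_ends_at k (heads_tails a u) j"
      moreover have "j - k - 1 \<le> a \<and> a < j - 1" using 3 by linarith
      ultimately have "heads_tails a u ! a" unfolding hkt_ends_at_def by blast
      then show False by (simp add: nth_heads_tails)
    qed
    with 3 show ?thesis by (auto simp: hkt_ends_at_def)
  next
    case 4
    then have "Suc a + (j - Suc a) = j" "k < j - Suc a" by linarith+
    then show ?thesis
      using 4 hkt_ends_at_append[of k "j - Suc a" "replicate a True @ [False]" u] by simp
  qed (auto simp: hkt_ends_at_def nth_heads_tails)
qed

lemma first_hkt_heads_tails: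
  "first_hkt k (heads_tails a u) \<longleftrightarrow> (k \<le> a \<and> u = []) \<or> (a < k \<and> first_hkt k u)"
proof -
  have not_at_0: "\<not> hkt_ends_at k w 0" for w by (simp add: hkt_ends_at_def)
  have "(\<forall>j < length (heads_tails a u). \<not> hkt_ends_at k (heads_tails a u) j) \<longleftrightarrow>
        (u \<noteq> [] \<longrightarrow> a < k) \<and> (\<forall>j < length u. \<not> hkt_ends_at k u j)"
  proof
    assume "\<forall>j < length (heads_tails a u). \<not> hkt_ends_at k (heads_tails a u) j"
    then have earlier: "\<not> hkt_ends_at k (heads_tails a u) j" if "j < Suc a + length u" for j
      using that by simp
    have "a < k" if "u \<noteq> []"
      using earlier[of "Suc a"] that by (simp add: hkt_ends_at_heads_tails)
    moreover have "\<not> hkt_ends_at k u j" if "j < length u" for j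
      using earlier[of "Suc a + j"] that not_at_0 by (cases "j = 0") (auto simp: hkt_ends_at_heads_tails)
    ultimately show "(u \<noteq> [] \<longrightarrow> a < k) \<and> (\<forall>j < length u. \<not> hkt_ends_at k u j)"
      by blast
  next
    assume "(u \<noteq> [] \<longrightarrow> a < k) \<and> (\<forall>j < length u. \<not> hkt_ends_at k u j)"
    then show "\<forall>j < length (heads_tails a u). \<not> hkt_ends_at k (heads_tails a u) j"
      by (auto simp: hkt_ends_at_heads_tails)
  qed
  then show ?thesis
    unfolding first_hkt_def by (auto simp: hkt_ends_at_heads_tails not_at_0)
qed

lemma heads_tails_inject:
  "heads_tails a u = heads_tails b v \<longleftrightarrow> a = b \<and> u = v"
proof (induction a arbitrary: b)
  case 0
  then show ?case by (cases b) auto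
next
  case (Suc a)
  then show ?case by (cases b) auto
qed

lemma first_hkt_length: "first_hkt k w \<Longrightarrow> k < length w"
  by (simp add: first_hkt_def hkt_ends_at_def)

lemma first_hkt_heads_tails_cases:
  assumes "first_hkt k w"
  obtains a u where "w = heads_tails a u"
proof -
  have "w \<noteq> []" using first_hkt_length[OF assms] by auto
  moreover have "\<not> last w"
    using assms \<open>w \<noteq> []\<close> by (simp add: first_hkt_def hkt_ends_at_def last_conv_nth)
  ultimately have "False \<in> set w" by (metis (full_types) last_in_set)
  then obtain ys zs where w: "w = ys @ False # zs" and "False \<notin> set ys"
    using split_list_first by metis
  then have "\<forall>y \<in> set ys. y = True" by (metis (full_types))
  then have "replicate (length ys) True = ys" by (rule replicate_length_same)
  with w show thesis using that by metis
qed

lemma first_hkt_words_eq: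
  "first_hkt_words k m =
     (if k < m then {heads_tails (m - 1) []} else {}) \<union>
     (\<Union>a<k. heads_tails a ` first_hkt_words k (m - Suc a))"
  (is "_ = ?Last \<union> ?Inner")
proof
  show "first_hkt_words k m \<subseteq> ?Last \<union> ?Inner"
  proof
    fix w assume w: "w \<in> first_hkt_words k m"
    then obtain a u where au: "w = heads_tails a u"
      using first_hkt_heads_tails_cases by blast
    from w consider "k \<le> a" "u = []" | "a < k" "first_hkt k u"
      unfolding au by (auto simp: first_hkt_heads_tails)
    then show "w \<in> ?Last \<union> ?Inner"
    proof cases
      case 1
      then show ?thesis using w unfolding au by auto
    next
      case 2
      then have "w \<in> heads_tails a ` first_hkt_words k (m - Suc a)" using w unfolding au by auto
      with \<open>a < k\<close> show ?thesis by blast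
    qed
  qed
  show "?Last \<union> ?Inner \<subseteq> first_hkt_words k m"
    by (auto simp: first_hkt_heads_tails dest: first_hkt_length)
qed

lemma card_first_hkt_words:
  "card (first_hkt_words k m) =
     (if k < m then 1 else 0) + (\<Sum>a<k. card (first_hkt_words k (m - Suc a)))"
proof -
  let ?Last = "if k < m then {heads_tails (m - 1) []} else {}"
  let ?Inner = "\<Union>a<k. heads_tails a ` first_hkt_words k (m - Suc a)"
  have finite_words: "finite (first_hkt_words k m')" for m'
    by (rule finite_subset[OF _ finite_list_length[of m']]) auto
  have "card ?Inner = (\<Sum>a<k. card (heads_tails a ` first_hkt_words k (m - Suc a)))"
    using finite_words by (intro card_UN_disjoint) (auto simp: heads_tails_inject)
  also have "\<dots> = (\<Sum>a<k. card (first_hkt_words k (m - Suc a)))"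
    by (intro sum.cong card_image) (auto simp: inj_on_def heads_tails_inject)
  finally have "card ?Inner = \<dots>" .
  moreover have "?Last \<inter> ?Inner = {}" by (auto simp: heads_tails_inject)
  ultimately show ?thesis
    using finite_words by (subst first_hkt_words_eq) (simp add: card_Un_disjoint)
qed

lemma prob_Y_renewal:
  "prob_Y k m = (if k < m then 1 / 2 ^ m else 0) +
     (\<Sum>i = 1..k. 1 / 2 ^ i * (if i \<le> m then prob_Y k (m - i) else 0))"
proof -
  have shifted: "real (card (first_hkt_words k (m - i))) / 2 ^ m =
                 1 / 2 ^ i * (if i \<le> m then prob_Y k (m - i) else 0)" for i
  proof (cases "i \<le> m")
    case True
    then have "(2::real) ^ m = 2 ^ i * 2 ^ (m - i)" by (simp flip: power_add)
    with True show ?thesis by (simp add: prob_Y_def)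
  next
    case False
    then have "first_hkt_words k (m - i) = {}" by (auto dest: first_hkt_length)
    with False show ?thesis by simp
  qed
  have "prob_Y k m = real (card (first_hkt_words k m)) / 2 ^ m" by (simp add: prob_Y_def)
  also have "\<dots> = (if k < m then 1 / 2 ^ m else 0) +
                  (\<Sum>a<k. real (card (first_hkt_words k (m - Suc a))) / 2 ^ m)"
    by (subst card_first_hkt_words) (simp add: add_divide_distrib sum_divide_distrib)
  also have "\<dots> = (if k < m then 1 / 2 ^ m else 0) +
                  (\<Sum>i = 1..k. 1 / 2 ^ i * (if i \<le> m then prob_Y k (m - i) else 0))"
    by (simp add: shifted sum.atLeast1_atMost_eq)
  finally show ?thesis .
qed

section \<open>Moments of renewal sequences\<close>

lemma sum_lessThan_delay:
  "(\<Sum>m<(N::nat). if i \<le> m then g (m - i) else 0) = (\<Sum>m<N - i. g m :: 'a :: comm_monoid_add)"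
proof (induction N)
  case (Suc N)
  show ?case
  proof (cases "i \<le> N")
    case True
    then have "Suc N - i = Suc (N - i)" by simp
    with Suc True show ?thesis by simp
  next
    case False
    then have "Suc N - i = N - i" by simp
    with Suc False show ?thesis by simp
  qed
qed simp

lemma power_add_binomial_mult:
  "(real m + real i) ^ n * x = (\<Sum>j\<le>n. real (n choose j) * real i ^ (n - j) * (real m ^ j * x))"
  unfolding binomial_ring[of "real m" "real i" n]
  by (simp add: sum_distrib_right sum_distrib_left mult_ac)

lemma partial_moment_delay_le:
  fixes p :: "nat \<Rightarrow> real"
  assumes "\<And>m. p m \<ge> 0"
  shows "(\<Sum>m<N. real m ^ n * (if i \<le> m then p (m - i) else 0)) \<le>
         (\<Sum>j\<le>n. real (n choose j) * real i ^ (n - j) * (\<Sum>m<N. real m ^ j * p m))"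
proof -
  have "(\<Sum>m<N. real m ^ n * (if i \<le> m then p (m - i) else 0)) =
        (\<Sum>m<N. if i \<le> m then real (m - i + i) ^ n * p (m - i) else 0)"
    by (rule sum.cong) auto
  also have "\<dots> = (\<Sum>m<N - i. real (m + i) ^ n * p m)"
    by (rule sum_lessThan_delay[where g = "\<lambda>m. real (m + i) ^ n * p m"])
  also have "\<dots> \<le> (\<Sum>m<N. real (m + i) ^ n * p m)"
    using assms by (intro sum_mono2) auto
  also have "\<dots> = (\<Sum>m<N. \<Sum>j\<le>n. real (n choose j) * real i ^ (n - j) * (real m ^ j * p m))"
    by (simp add: power_add_binomial_mult)
  also have "\<dots> = (\<Sum>j\<le>n. real (n choose j) * real i ^ (n - j) * (\<Sum>m<N. real m ^ j * p m))"
    by (subst sum.swap) (simp add: sum_distrib_left)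
  finally show ?thesis .
qed

lemma moment_delay_sums:
  fixes p :: "nat \<Rightarrow> real"
  assumes "\<And>j. summable (\<lambda>m. real m ^ j * p m)"
  shows "(\<lambda>m. real m ^ n * (if i \<le> m then p (m - i) else 0)) sums
           (\<Sum>j\<le>n. real (n choose j) * real i ^ (n - j) * (\<Sum>m. real m ^ j * p m))"
    (is "?f sums ?S")
proof -
  have "(\<lambda>m. \<Sum>j\<le>n. real (n choose j) * real i ^ (n - j) * (real m ^ j * p m)) sums ?S"
    by (intro sums_sum sums_mult summable_sums assms)
  then have "(\<lambda>m. ?f (m + i)) sums ?S"
    by (simp add: power_add_binomial_mult)
  moreover have "(\<Sum>m<i. ?f m) = 0" by (rule sum.neutral) auto
  ultimately show ?thesis using sums_iff_shift[of ?f i ?S] by simp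
qed

locale renewal_sequence =
  fixes p e w :: "nat \<Rightarrow> real" and I :: "nat set"
  assumes p_nonneg: "p m \<ge> 0" and e_nonneg: "e m \<ge> 0" and w_nonneg: "i \<in> I \<Longrightarrow> w i \<ge> 0"
    and weights_lt_1: "(\<Sum>i\<in>I. w i) < 1"
    and e_moments_summable: "summable (\<lambda>m. real m ^ n * e m)"
    and renewal_eq: "p m = e m + (\<Sum>i\<in>I. w i * (if i \<le> m then p (m - i) else 0))"
begin

lemma moment_split:
  "real m ^ n * p m =
     real m ^ n * e m + (\<Sum>i\<in>I. w i * (real m ^ n * (if i \<le> m then p (m - i) else 0)))"
  by (subst renewal_eq) (simp add: sum_distrib_left algebra_simps)

text \<open>By induction on n: the renewal equation bounds the N-th partial sum of the n-th moment
  by a constant (from the lower moments) plus (sum_i w i) times itself, and sum_i w i < 1.\<close>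

lemma moments_summable: "summable (\<lambda>m. real m ^ n * p m)"
proof (induction n rule: less_induct)
  case (less n)
  define M where "M j = (\<Sum>m. real m ^ j * p m)" for j
  define R where "R i = (\<Sum>j<n. real (n choose j) * real i ^ (n - j) * M j)" for i
  define W where "W = (\<Sum>i\<in>I. w i)"
  define B where "B = ((\<Sum>m. real m ^ n * e m) + (\<Sum>i\<in>I. w i * R i)) / (1 - W)"
  show ?case
  proof (rule summableI_nonneg_bounded)
    show "0 \<le> real m ^ n * p m" for m using p_nonneg by simp
  next
    fix N
    let ?F = "\<lambda>j. \<Sum>m<N. real m ^ j * p m"
    have lower_moments: "?F j \<le> M j" if "j < n" for j
      unfolding M_def using p_nonneg by (intro sum_le_suminf less.IH that) auto
    have delayed: "(\<Sum>m<N. real m ^ n * (if i \<le> m then p (m - i) else 0)) \<le> ?F n + R i" for i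
    proof -
      have "(\<Sum>m<N. real m ^ n * (if i \<le> m then p (m - i) else 0)) \<le>
            (\<Sum>j\<le>n. real (n choose j) * real i ^ (n - j) * ?F j)"
        using p_nonneg by (rule partial_moment_delay_le)
      also have "\<dots> = ?F n + (\<Sum>j<n. real (n choose j) * real i ^ (n - j) * ?F j)"
        by (simp add: lessThan_Suc_atMost[symmetric])
      also have "\<dots> \<le> ?F n + R i"
        unfolding R_def by (intro add_left_mono sum_mono mult_left_mono lower_moments) auto
      finally show ?thesis .
    qed
    have "?F n = (\<Sum>m<N. real m ^ n * e m) +
                 (\<Sum>i\<in>I. w i * (\<Sum>m<N. real m ^ n * (if i \<le> m then p (m - i) else 0)))"
      by (simp add: moment_split sum.distrib sum_distrib_left sum.swap[of _ "{..<N}" I])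
    also have "\<dots> \<le> (\<Sum>m. real m ^ n * e m) + (\<Sum>i\<in>I. w i * (?F n + R i))"
      using e_nonneg w_nonneg delayed
      by (intro add_mono sum_le_suminf e_moments_summable sum_mono mult_left_mono) auto
    also have "\<dots> = (\<Sum>m. real m ^ n * e m) + (\<Sum>i\<in>I. w i * R i) + W * ?F n"
      unfolding W_def by (simp add: algebra_simps sum.distrib sum_distrib_right)
    finally have "(1 - W) * ?F n \<le> (\<Sum>m. real m ^ n * e m) + (\<Sum>i\<in>I. w i * R i)"
      by (simp add: algebra_simps)
    moreover have "1 - W > 0" using weights_lt_1 unfolding W_def by simp
    ultimately show "?F n \<le> B" unfolding B_def by (simp add: pos_le_divide_eq mult.commute)
  qed
qed

lemma moment_eq:
  "(\<Sum>m. real m ^ n * p m) = (\<Sum>m. real m ^ n * e m) +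
     (\<Sum>i\<in>I. w i * (\<Sum>j\<le>n. real (n choose j) * real i ^ (n - j) * (\<Sum>m. real m ^ j * p m)))"
proof -
  have "(\<lambda>m. real m ^ n * e m + (\<Sum>i\<in>I. w i * (real m ^ n * (if i \<le> m then p (m - i) else 0))))
        sums ((\<Sum>m. real m ^ n * e m) +
          (\<Sum>i\<in>I. w i * (\<Sum>j\<le>n. real (n choose j) * real i ^ (n - j) * (\<Sum>m. real m ^ j * p m))))"
    by (intro sums_add summable_sums e_moments_summable sums_sum sums_mult
        moment_delay_sums moments_summable)
  then show ?thesis by (simp add: moment_split sums_iff)
qed

end

text \<open>The geometric sequence 2^-m is itself a renewal sequence with the single delay 1.\<close>

lemma geometric_moments_summable: "summable (\<lambda>m. real m ^ n / 2 ^ m)"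
proof -
  interpret renewal_sequence "\<lambda>m. 1 / 2 ^ m" "\<lambda>m. if m = 0 then 1 else 0" "\<lambda>_. 1 / 2" "{1}"
  proof
    show "summable (\<lambda>m. real m ^ n * (if m = 0 then 1 else 0))" for n
      by (rule summable_finite[of "{0}"]) auto
    show "1 / 2 ^ m = (if m = 0 then 1 else 0) +
            (\<Sum>i\<in>{1}. 1 / 2 * (if i \<le> m then 1 / 2 ^ (m - i) else 0 :: real))" for m
      by (cases m) auto
  qed auto
  show ?thesis using moments_summable[of n] by simp
qed

section \<open>Worpitzky's identity and the ordered Bell numbers\<close>

lemma eulerian_eq_0: "n < i \<Longrightarrow> eulerian n i = 0"
  by (cases n) auto

lemma worpitzky_step_binomial:
  assumes "i \<le> n"
  shows "real i * real (Suc (x + n - i) choose Suc n) +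
           real (n + 1 - i) * real ((x + n - i) choose Suc n) =
         real x * real ((x + n - i) choose n)"
proof -
  define y where "y = x + n - i"
  define C where "C = real (y choose n)"
  define D where "D = real (Suc y choose Suc n)"
  define D' where "D' = real (y choose Suc n)"
  have D: "real (Suc n) * D = real (Suc y) * C"
    unfolding C_def D_def using Suc_times_binomial_eq[of y n] by (metis mult.commute of_nat_mult)
  have D': "real (Suc n) * D' = (real y - real n) * C"
    using D unfolding C_def D_def D'_def by (simp add: algebra_simps)
  have "real (Suc n) * (real i * D + real (n + 1 - i) * D') =
        real i * (real (Suc n) * D) + real (n + 1 - i) * (real (Suc n) * D')"
    by (simp add: algebra_simps)
  also have "\<dots> = real (Suc n) * (real x * C)"
    unfolding D D' y_def using assms by (simp add: of_nat_diff algebra_simps)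
  finally show ?thesis unfolding C_def D_def D'_def y_def by simp
qed

theorem worpitzky_identity:
  "real x ^ n = (\<Sum>i\<le>n. real (eulerian n i) * real ((x + n - i) choose n))"
proof (induction n)
  case (Suc n)
  let ?E = "\<lambda>i. real (eulerian n i)"
  have "(\<Sum>i\<le>Suc n. real (eulerian (Suc n) i) * real ((x + Suc n - i) choose Suc n)) =
        (\<Sum>i\<le>Suc n. real i * ?E i * real ((x + Suc n - i) choose Suc n)) +
        (\<Sum>i\<le>Suc n. if i = 0 then 0
                     else real (Suc n - i + 1) * ?E (i - 1) * real ((x + Suc n - i) choose Suc n))"
  proof (subst sum.distrib[symmetric], intro sum.cong refl)
    fix i assume "i \<in> {..Suc n}"
    show "real (eulerian (Suc n) i) * real ((x + Suc n - i) choose Suc n) =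
        real i * ?E i * real ((x + Suc n - i) choose Suc n) +
        (if i = 0 then 0
         else real (Suc n - i + 1) * ?E (i - 1) * real ((x + Suc n - i) choose Suc n))"
    proof (cases "i = 0")
      case False
      with \<open>i \<in> {..Suc n}\<close> have
        "eulerian (Suc n) i = i * eulerian n i + (Suc n - i + 1) * eulerian n (i - 1)"
        by simp
      then have "real (eulerian (Suc n) i) = real i * ?E i + real (Suc n - i + 1) * ?E (i - 1)"
        by (metis of_nat_add of_nat_mult)
      with False show ?thesis by (simp only: if_False distrib_right)
    qed simp
  qed
  also have "(\<Sum>i\<le>Suc n. real i * ?E i * real ((x + Suc n - i) choose Suc n)) =
             (\<Sum>i\<le>n. real i * ?E i * real (Suc (x + n - i) choose Suc n))"
    by (simp add: eulerian_eq_0 Suc_diff_le)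
  also have "(\<Sum>i\<le>Suc n. if i = 0 then 0
               else real (Suc n - i + 1) * ?E (i - 1) * real ((x + Suc n - i) choose Suc n)) =
             (\<Sum>i\<le>n. real (n + 1 - i) * ?E i * real ((x + n - i) choose Suc n))"
    by (subst sum.atMost_Suc_shift) (simp add: add_diff_eq)
  also have "(\<Sum>i\<le>n. real i * ?E i * real (Suc (x + n - i) choose Suc n)) +
             (\<Sum>i\<le>n. real (n + 1 - i) * ?E i * real ((x + n - i) choose Suc n)) =
             (\<Sum>i\<le>n. ?E i * (real i * real (Suc (x + n - i) choose Suc n) +
                         real (n + 1 - i) * real ((x + n - i) choose Suc n)))"
    by (simp add: sum.distrib[symmetric] algebra_simps)
  also have "\<dots> = (\<Sum>i\<le>n. ?E i * (real x * real ((x + n - i) choose n)))"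
    by (intro sum.cong refl) (simp only: worpitzky_step_binomial atMost_iff)
  also have "\<dots> = real x ^ Suc n" by (simp add: Suc sum_distrib_left algebra_simps)
  finally show ?case by simp
qed simp

lemma binomial_div_pow2_sums: "(\<lambda>y. real (y choose n) / 2 ^ y) sums 2"
proof -
  have summable: "summable (\<lambda>y. real (y choose n) / 2 ^ y)" for n
  proof (rule summable_comparison_test'[OF geometric_moments_summable[of n]])
    have "y choose n \<le> y ^ n" for y
      by (cases "n \<le> y") (simp_all add: binomial_le_pow binomial_eq_0)
    then have "real (y choose n) \<le> real y ^ n" for y
      by (metis of_nat_le_iff of_nat_power)
    then show "norm (real (y choose n) / 2 ^ y) \<le> real y ^ n / 2 ^ y" for y
      by (simp add: divide_right_mono)
  qed
  have "(\<Sum>y. real (y choose n) / 2 ^ y) = 2"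
  proof (induction n)
    case 0
    have "(\<lambda>y. (1 / 2 :: real) ^ y) sums 2" using geometric_sums[of "1 / 2 :: real"] by simp
    then show ?case by (simp add: sums_iff power_divide)
  next
    case (Suc n)
    let ?f = "\<lambda>y. real (y choose Suc n) / 2 ^ y"
    let ?g = "\<lambda>y. real (y choose n) / 2 ^ y"
    have "(\<lambda>y. ?f (Suc y)) = (\<lambda>y. (?g y + ?f y) / 2)" by (simp add: field_simps)
    moreover have "(\<lambda>y. (?g y + ?f y) / 2) sums ((suminf ?g + suminf ?f) / 2)"
      by (intro sums_divide sums_add summable_sums summable)
    ultimately have "(\<Sum>y. ?f (Suc y)) = (suminf ?g + suminf ?f) / 2"
      by (simp add: sums_iff)
    moreover have "(\<Sum>y. ?f (Suc y)) = suminf ?f - ?f 0"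
      by (rule suminf_split_head[OF summable])
    ultimately have "suminf ?f = suminf ?g" by simp
    with Suc show ?case by simp
  qed
  then show ?thesis using summable[of n] by (simp add: sums_iff)
qed

lemma shifted_binomial_div_pow2_sums:
  assumes "m \<le> n"
  shows "(\<lambda>x. real ((x + m) choose n) / 2 ^ x) sums 2 ^ Suc m"
proof -
  let ?f = "\<lambda>y. real (y choose n) / 2 ^ y"
  have "(\<Sum>y<m. ?f y) = 0" using assms by (intro sum.neutral) auto
  then have "?f sums (2 + (\<Sum>y<m. ?f y))" using binomial_div_pow2_sums by simp
  then have "(\<lambda>x. ?f (x + m)) sums 2" by (rule sums_iff_shift[THEN iffD2])
  then have "(\<lambda>x. 2 ^ m * ?f (x + m)) sums (2 ^ m * 2)" by (rule sums_mult)
  then show ?thesis by (simp add: power_add mult.commute)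
qed

lemma geometric_moment_sums: "(\<lambda>m. real m ^ n / 2 ^ m) sums (2 * real (fubini n))"
proof -
  have "(\<lambda>x. \<Sum>i\<le>n. real (eulerian n i) * (real ((x + (n - i)) choose n) / 2 ^ x)) sums
        (\<Sum>i\<le>n. real (eulerian n i) * 2 ^ Suc (n - i))"
    by (intro sums_sum sums_mult shifted_binomial_div_pow2_sums) auto
  moreover have "(\<Sum>i\<le>n. real (eulerian n i) * 2 ^ Suc (n - i)) = 2 * real (fubini n)"
    unfolding fubini_def by (simp add: atLeast0AtMost sum_distrib_left mult_ac)
  ultimately show ?thesis
    by (subst worpitzky_identity) (simp add: sum_divide_distrib)
qed

section \<open>Moments of the waiting time for H^k T\<close>

lemma sum_inverse_pow2: "(\<Sum>i = 1..k. 1 / 2 ^ i :: real) = 1 - 1 / 2 ^ k"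
proof (induction k)
  case (Suc k)
  then show ?case
    using sum.cl_ivl_Suc[of "\<lambda>i. 1 / 2 ^ i :: real" 1 k] by (simp add: field_simps)
qed simp

lemma sum_inverse_pow2_mult: "(\<Sum>i = 1..k. 1 / 2 ^ i * c :: real) = (1 - 1 / 2 ^ k) * c"
  by (simp only: sum_distrib_right[symmetric] sum_inverse_pow2)

interpretation first_hkt: renewal_sequence
  "prob_Y k" "\<lambda>m. if k < m then 1 / 2 ^ m else 0" "\<lambda>i. 1 / 2 ^ i" "{1..k}" for k
proof
  show "summable (\<lambda>m. real m ^ n * (if k < m then 1 / 2 ^ m else 0))" for n
    by (rule summable_comparison_test'[OF geometric_moments_summable[of n]]) simp
  show "(\<Sum>i = 1..k. 1 / 2 ^ i :: real) < 1"
    using sum_inverse_pow2[of k] by simp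
  show "prob_Y k m = (if k < m then 1 / 2 ^ m else 0) +
          (\<Sum>i = 1..k. 1 / 2 ^ i * (if i \<le> m then prob_Y k (m - i) else 0))" for m
    by (rule prob_Y_renewal)
qed (simp_all add: prob_Y_def)

lemma tail_geometric_moment:
  "(\<Sum>m. real m ^ n * (if k < m then 1 / 2 ^ m else 0)) =
     2 * real (fubini n) - (\<Sum>m\<le>k. real m ^ n / 2 ^ m)"
proof -
  have "(\<lambda>m. real m ^ n / 2 ^ m - (if m \<in> {..k} then real m ^ n / 2 ^ m else 0)) sums
        (2 * real (fubini n) - (\<Sum>m\<le>k. real m ^ n / 2 ^ m))"
    by (intro sums_diff geometric_moment_sums sums_If_finite_set) simp
  moreover have "(\<lambda>m. real m ^ n / 2 ^ m - (if m \<in> {..k} then real m ^ n / 2 ^ m else 0)) =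
                 (\<lambda>m. real m ^ n * (if k < m then 1 / 2 ^ m else 0))"
    by auto
  ultimately show ?thesis by (simp add: sums_iff)
qed

lemma sum_atMost_split_ends:
  assumes "(n::nat) \<ge> 1"
  shows "(\<Sum>j\<le>n. f j) = f 0 + (\<Sum>j = 1..n - 1. f j) + (f n :: 'a :: comm_monoid_add)"
proof -
  obtain n' where n: "n = Suc n'" using assms by (cases n) auto
  have "(\<Sum>j\<le>n. f j) = f 0 + (\<Sum>j<n'. f (Suc j)) + f n"
    by (simp add: n sum.atMost_shift add.assoc)
  also have "(\<Sum>j<n'. f (Suc j)) = (\<Sum>j = 1..n - 1. f j)"
    by (simp add: n sum.atLeast1_atMost_eq)
  finally show ?thesis .
qed

lemma moment_Y_renewal:
  "moment_Y k n = (\<Sum>m. real m ^ n * (if k < m then 1 / 2 ^ m else 0)) +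
     (\<Sum>i = 1..k. 1 / 2 ^ i * (\<Sum>j\<le>n. real (n choose j) * real i ^ (n - j) * moment_Y k j))"
  unfolding moment_Y_def by (rule first_hkt.moment_eq)

lemma moment_Y_0: "moment_Y k 0 = 1"
proof -
  have "(\<Sum>m\<le>k. 1 / 2 ^ m :: real) = 1 + (\<Sum>i = 1..k. 1 / 2 ^ i)"
    by (simp add: sum.atMost_shift sum.atLeast1_atMost_eq)
  then have tail: "(\<Sum>m. real m ^ 0 * (if k < m then 1 / 2 ^ m else 0)) = 1 / 2 ^ k"
    using tail_geometric_moment[of 0 k] sum_inverse_pow2[of k] by (simp add: fubini_def)
  have weights: "(\<Sum>i = 1..k. 1 / 2 ^ i *
      (\<Sum>j\<le>0. real (0 choose j) * real i ^ (0 - j) * moment_Y k j)) = (1 - 1 / 2 ^ k) * moment_Y k 0"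
    using sum_inverse_pow2_mult[where c = "moment_Y k 0"] by simp
  have "moment_Y k 0 = 1 / 2 ^ k + (1 - 1 / 2 ^ k) * moment_Y k 0"
    using moment_Y_renewal[of k 0] unfolding tail weights .
  then show ?thesis by (simp add: algebra_simps)
qed

lemma moment_Y_recurrence:
  assumes "n \<ge> 1"
  shows "moment_Y k n = 2 ^ (k + 1) * real (fubini n) + (\<Sum>i = 1..k. 2 ^ (k - i) *
           (\<Sum>j = 1..n - 1. real (n choose j) * real i ^ (n - j) * moment_Y k j))"
proof -
  define R where "R i = (\<Sum>j = 1..n - 1. real (n choose j) * real i ^ (n - j) * moment_Y k j)"
    for i :: nat
  have binomial_terms: "(\<Sum>j\<le>n. real (n choose j) * real i ^ (n - j) * moment_Y k j) =
                        real i ^ n + R i + moment_Y k n" for i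
    unfolding R_def by (subst sum_atMost_split_ends[OF assms]) (simp add: moment_Y_0)
  have "(\<Sum>m\<le>k. real m ^ n / 2 ^ m) = (\<Sum>i = 1..k. real i ^ n / 2 ^ i)"
    using assms by (simp add: sum.atMost_shift sum.atLeast1_atMost_eq)
  then have tail: "(\<Sum>m. real m ^ n * (if k < m then 1 / 2 ^ m else 0)) =
                   2 * real (fubini n) - (\<Sum>i = 1..k. real i ^ n / 2 ^ i)"
    by (simp only: tail_geometric_moment)
  have "moment_Y k n = 2 * real (fubini n) - (\<Sum>i = 1..k. real i ^ n / 2 ^ i) +
          (\<Sum>i = 1..k. 1 / 2 ^ i * (real i ^ n + R i + moment_Y k n))"
    using moment_Y_renewal[of k n] unfolding tail binomial_terms .
  also have "\<dots> = 2 * real (fubini n) + (\<Sum>i = 1..k. R i / 2 ^ i) +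
                   (1 - 1 / 2 ^ k) * moment_Y k n"
    using sum_inverse_pow2_mult[where c = "moment_Y k n"] by (simp add: sum.distrib distrib_left)
  finally have "moment_Y k n = 2 ^ k * (2 * real (fubini n) + (\<Sum>i = 1..k. R i / 2 ^ i))"
    by (simp add: field_simps)
  also have "\<dots> = 2 ^ (k + 1) * real (fubini n) + (\<Sum>i = 1..k. 2 ^ (k - i) * R i)"
    by (simp add: distrib_left sum_distrib_left power_diff)
  finally show ?thesis unfolding R_def .
qed

theorem corollary3p6:
  fixes k n :: nat
  assumes "k \<ge> 1" and "n \<ge> 1"
  shows "moment_Y k n =
           2 ^ (k + 1) * real (fubini n)
           + (\<Sum>j = 1..n - 1. real (n choose j) * moment_Y k j *
                (\<Sum>i = 1..k. real i ^ (n - j) * 2 ^ (k - i)))"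
proof -
  have "(\<Sum>i = 1..k. 2 ^ (k - i) *
           (\<Sum>j = 1..n - 1. real (n choose j) * real i ^ (n - j) * moment_Y k j)) =
        (\<Sum>i = 1..k. \<Sum>j = 1..n - 1.
           2 ^ (k - i) * (real (n choose j) * real i ^ (n - j) * moment_Y k j))"
    by (simp add: sum_distrib_left)
  also have "\<dots> = (\<Sum>j = 1..n - 1. \<Sum>i = 1..k.
           2 ^ (k - i) * (real (n choose j) * real i ^ (n - j) * moment_Y k j))"
    by (rule sum.swap)
  also have "\<dots> = (\<Sum>j = 1..n - 1. real (n choose j) * moment_Y k j *
           (\<Sum>i = 1..k. real i ^ (n - j) * 2 ^ (k - i)))"
    by (simp add: sum_distrib_left mult_ac)
  finally show ?thesis using moment_Y_recurrence[OF assms(2)] by simp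
qed

end
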